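(* Let $T\subseteq 2^{<\omega}$ be a tree with $\lambda([T])>0$ and let $\varepsilon>0$. Call $s\in T\cap 2^k$ fat if $\lambda([T]\cap[s])\ge(1-\varepsilon)/2^k$. Then there is $k^*<\omega$ such that for all $k\ge k^*$, the number of fat nodes $s\in T\cap 2^k$ is at least $|T\cap 2^k|\cdot(1-\varepsilon)$.
   Context: A tree is a subset of $2^{<\omega}$ closed under initial segments; $[T]$ is its set of branches in $2^\omega$, $[s]$ is the set of $x\in 2^\omega$ extending $s$, and $\lambda$ is the standard product (Lebesgue) measure on $2^\omega$. *)

theory Defs
  imports "HOL-Probability.Probability"
begin

text \<open>Finite binary strings 2^{<omega} are bool lists; 2^omega is nat => bool.\<close>

definition is_tree :: "bool list set \<Rightarrow> bool" where
  "is_tree T \<longleftrightarrow> (\<forall>s\<in>T. \<forall>n. take n s \<in> T)"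

definition branches :: "bool list set \<Rightarrow> (nat \<Rightarrow> bool) set" where
  "branches T = {x. \<forall>n. map x [0..<n] \<in> T}"

definition cyl :: "bool list \<Rightarrow> (nat \<Rightarrow> bool) set" where
  "cyl s = {x. \<forall>i<length s. x i = s ! i}"

definition lam :: "(nat \<Rightarrow> bool) measure" where
  "lam = PiM UNIV (\<lambda>_. measure_pmf (bernoulli_pmf (1/2)))"

definition level :: "bool list set \<Rightarrow> nat \<Rightarrow> bool list set" where
  "level T k = {s\<in>T. length s = k}"

definition fat :: "bool list set \<Rightarrow> real \<Rightarrow> bool list \<Rightarrow> bool" where
  "fat T \<epsilon> s \<longleftrightarrow> measure lam (branches T \<inter> cyl s) \<ge> (1 - \<epsilon>) / 2 ^ length s"

end

theory Submission imports Defs begin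

text \<open>
  The sets \<open>U\<^sub>k = \<Union>{[s] | s \<in> T \<inter> 2\<^sup>k}\<close> decrease to \<open>[T]\<close>, and \<open>\<lambda>(U\<^sub>k) = |T \<inter> 2\<^sup>k| / 2\<^sup>k\<close>,
  so \<open>|T \<inter> 2\<^sup>k| / 2\<^sup>k\<close> converges to \<open>\<mu> = \<lambda>([T])\<close> from above. On the other hand
  \<open>\<mu> = \<Sum>\<^sub>s \<lambda>([T] \<inter> [s])\<close>, where each node contributes at most \<open>2\<^sup>-\<^sup>k\<close> and each non-fat
  node less than \<open>(1 - \<epsilon>) 2\<^sup>-\<^sup>k\<close>; hence \<open>\<epsilon>\<close> times the number of non-fat nodes is at most
  \<open>|T \<inter> 2\<^sup>k| - 2\<^sup>k \<mu>\<close>. Once \<open>|T \<inter> 2\<^sup>k| / 2\<^sup>k - \<mu> \<le> \<epsilon>\<^sup>2 \<mu>\<close>, this is at most \<open>\<epsilon>\<^sup>2 |T \<inter> 2\<^sup>k|\<close>.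
\<close>

interpretation lam: prob_space lam
  unfolding lam_def by (intro prob_space_PiM) (simp add: prob_space_measure_pmf)

lemma cyl_eq_prod_emb:
  "cyl s = prod_emb UNIV (\<lambda>_. measure_pmf (bernoulli_pmf (1/2))) {..<length s}
             (Pi\<^sub>E {..<length s} (\<lambda>i. {s ! i}))"
  unfolding cyl_def prod_emb_def by (auto simp: PiE_def Pi_def)

lemma sets_cyl [measurable]: "cyl s \<in> sets lam"
  unfolding cyl_eq_prod_emb lam_def by (intro sets_PiM_I) auto

lemma measure_cyl: "measure lam (cyl s) = 1 / 2 ^ length s"
proof -
  have "emeasure lam (cyl s) = (\<Prod>i<length s. emeasure (measure_pmf (bernoulli_pmf (1/2))) {s ! i})"
    unfolding cyl_eq_prod_emb lam_def
    by (rule emeasure_PiM_emb) (auto simp: prob_space_measure_pmf)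
  also have "\<dots> = ennreal (1/2) ^ length s"
    by (simp add: emeasure_pmf_single)
  also have "\<dots> = ennreal ((1/2) ^ length s)"
    using ennreal_power[of "1/2" "length s"] by simp
  finally show ?thesis
    by (simp add: measure_def power_divide)
qed

lemma mem_cyl_iff: "length s = k \<Longrightarrow> x \<in> cyl s \<longleftrightarrow> map x [0..<k] = s"
  unfolding cyl_def by (auto simp: list_eq_iff_nth_eq)

lemma finite_level: "finite (level T k)"
  using finite_lists_length_eq[of "UNIV :: bool set" k]
  by (rule finite_subset[rotated]) (auto simp: level_def)

lemma disjoint_family_on_cyl_level: "disjoint_family_on cyl (level T k)"
  unfolding disjoint_family_on_def level_def by (auto simp: mem_cyl_iff)

definition cyl_level :: "bool list set \<Rightarrow> nat \<Rightarrow> (nat \<Rightarrow> bool) set" where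
  "cyl_level T k = (\<Union>s\<in>level T k. cyl s)"

lemma cyl_level_eq: "cyl_level T k = {x. map x [0..<k] \<in> T}"
  unfolding cyl_level_def level_def by (auto simp: mem_cyl_iff)

lemma sets_cyl_level [measurable]: "cyl_level T k \<in> sets lam"
  unfolding cyl_level_def by (intro sets.finite_UN finite_level sets_cyl)

lemma measure_cyl_level: "measure lam (cyl_level T k) = card (level T k) / 2 ^ k"
proof -
  have "measure lam (cyl_level T k) = (\<Sum>s\<in>level T k. measure lam (cyl s))"
    unfolding cyl_level_def
    by (intro lam.finite_measure_finite_Union finite_level disjoint_family_on_cyl_level) auto
  also have "\<dots> = (\<Sum>s\<in>level T k. 1 / 2 ^ k)"
    by (intro sum.cong) (auto simp: measure_cyl level_def)
  finally show ?thesis by simp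
qed

lemma branches_eq_INT_cyl_level: "branches T = (\<Inter>k. cyl_level T k)"
  unfolding branches_def cyl_level_eq by auto

lemma branches_subset_cyl_level: "branches T \<subseteq> cyl_level T k"
  unfolding branches_eq_INT_cyl_level by blast

lemma sets_branches [measurable]: "branches T \<in> sets lam"
  unfolding branches_eq_INT_cyl_level by (intro sets.countable_INT') auto

lemma decseq_cyl_level:
  assumes "is_tree T"
  shows "decseq (cyl_level T)"
proof (intro decseq_SucI subsetI)
  fix k x assume "x \<in> cyl_level T (Suc k)"
  then have "take k (map x [0..<Suc k]) \<in> T"
    using assms unfolding is_tree_def cyl_level_eq by blast
  then show "x \<in> cyl_level T k"
    by (simp add: cyl_level_eq take_map)
qed

lemma card_level_divide_tendsto:
  assumes "is_tree T"
  shows "(\<lambda>k. card (level T k) / 2 ^ k) \<longlonglongrightarrow> measure lam (branches T)"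
  using lam.finite_Lim_measure_decseq[OF _ decseq_cyl_level[OF assms]]
  by (simp add: measure_cyl_level branches_eq_INT_cyl_level image_subset_iff)

lemma measure_branches_le_card_level: "measure lam (branches T) \<le> card (level T k) / 2 ^ k"
  using lam.finite_measure_mono[OF branches_subset_cyl_level sets_cyl_level]
  by (simp add: measure_cyl_level)

lemma measure_branches_eq_sum_level:
  "measure lam (branches T) = (\<Sum>s\<in>level T k. measure lam (branches T \<inter> cyl s))"
proof -
  have "branches T = (\<Union>s\<in>level T k. branches T \<inter> cyl s)"
    using branches_subset_cyl_level[of T k] unfolding cyl_level_def by blast
  also have "measure lam \<dots> = (\<Sum>s\<in>level T k. measure lam (branches T \<inter> cyl s))"
    using disjoint_family_on_cyl_level[of T k]
    by (intro lam.finite_measure_finite_Union finite_level)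
       (auto simp: disjoint_family_on_def)
  finally show ?thesis .
qed

lemma card_not_fat_le:
  fixes \<epsilon> :: real
  shows "\<epsilon> * card {s\<in>level T k. \<not> fat T \<epsilon> s} \<le> card (level T k) - 2 ^ k * measure lam (branches T)"
proof -
  let ?m = "\<lambda>s. 2 ^ k * measure lam (branches T \<inter> cyl s)"
  have node_le: "?m s \<le> 1 - (if fat T \<epsilon> s then 0 else \<epsilon>)" if "s \<in> level T k" for s
  proof -
    have "length s = k" using that by (simp add: level_def)
    moreover have "measure lam (branches T \<inter> cyl s) \<le> measure lam (cyl s)"
      by (intro lam.finite_measure_mono) auto
    ultimately show ?thesis
      by (auto simp: measure_cyl fat_def field_simps)
  qed
  have "2 ^ k * measure lam (branches T) = (\<Sum>s\<in>level T k. ?m s)"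
    unfolding measure_branches_eq_sum_level[of T k] by (simp add: sum_distrib_left)
  also have "\<dots> \<le> (\<Sum>s\<in>level T k. 1 - (if fat T \<epsilon> s then 0 else \<epsilon>))"
    by (intro sum_mono node_le)
  also have "\<dots> = card (level T k) - \<epsilon> * card {s\<in>level T k. \<not> fat T \<epsilon> s}"
    by (simp add: sum_subtractf sum.If_cases finite_level Int_def)
  finally show ?thesis by simp
qed

lemma card_fat_ge:
  fixes \<epsilon> :: real
  assumes "\<epsilon> > 0"
    and close: "card (level T k) / 2 ^ k - measure lam (branches T) \<le> \<epsilon>\<^sup>2 * measure lam (branches T)"
  shows "card {s\<in>level T k. fat T \<epsilon> s} \<ge> card (level T k) * (1 - \<epsilon>)"
proof -
  let ?N = "real (card (level T k))" and ?\<mu> = "measure lam (branches T)"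
  have "\<epsilon> * card {s\<in>level T k. \<not> fat T \<epsilon> s} \<le> ?N - 2 ^ k * ?\<mu>"
    by (rule card_not_fat_le)
  also have "\<dots> \<le> \<epsilon>\<^sup>2 * (2 ^ k * ?\<mu>)"
    using close by (simp add: field_simps)
  also have "\<dots> \<le> \<epsilon>\<^sup>2 * ?N"
    using measure_branches_le_card_level[of T k]
    by (intro mult_left_mono) (simp_all add: field_simps)
  finally have "card {s\<in>level T k. \<not> fat T \<epsilon> s} \<le> \<epsilon> * ?N"
    using assms(1) by (simp add: power2_eq_square mult.assoc)
  moreover have "?N = card {s\<in>level T k. fat T \<epsilon> s} + card {s\<in>level T k. \<not> fat T \<epsilon> s}"
    using finite_level[of T k]
    by (subst card_Un_disjoint[symmetric]) (auto intro: arg_cong[where f = card])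
  ultimately show ?thesis by (simp add: algebra_simps)
qed

theorem lemma12p2:
  fixes T :: "bool list set" and \<epsilon> :: real
  assumes "is_tree T"
    and "measure lam (branches T) > 0"
    and "\<epsilon> > 0"
  shows "\<exists>kstar::nat. \<forall>k\<ge>kstar.
           real (card {s\<in>level T k. fat T \<epsilon> s}) \<ge> real (card (level T k)) * (1 - \<epsilon>)"
proof -
  have "\<epsilon>\<^sup>2 * measure lam (branches T) > 0"
    using assms(2,3) by simp
  then obtain kstar where
    "\<forall>k\<ge>kstar. dist (card (level T k) / 2 ^ k) (measure lam (branches T))
                 < \<epsilon>\<^sup>2 * measure lam (branches T)"
    using card_level_divide_tendsto[OF assms(1)] unfolding LIMSEQ_def by blast
  then have "\<forall>k\<ge>kstar. card (level T k) / 2 ^ k - measure lam (branches T)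
                 \<le> \<epsilon>\<^sup>2 * measure lam (branches T)"
    by (auto simp: dist_real_def abs_less_iff less_imp_le)
  then show ?thesis
    using card_fat_ge[OF assms(3)] by blast
qed

end
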